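(* In a monadic Markov logic network over a finite domain, the set of ground atoms (the random variables) has an exchangeable decomposition whose width equals the number of predicates.
   Context: A Markov logic network (MLN) is a finite set of pairs $(w,f)$ with $w\in\mathbb{R}$ and $f$ a function-free first-order formula containing no constants. Given a finite domain $\mathsf{D}$ of constants, the grounding replaces each formula by all its instantiations of logical variables with constants (same weight). The random variables are all ground atoms (binary); a world $\bm{x}$ (truth assignment to all ground atoms) has probability proportional to $\prod \exp(w)$ over ground formulas $(w,f)$ satisfied by $\bm{x}$. An MLN is monadic if all its predicates are unary. A variable decomposition $\{\bm{X}_1,\dots,\bm{X}_k\}$ partitions the variables; its width is $\max_i|\bm{X}_i|$. It is exchangeable if all blocks have equal size, each block is an ordered tuple, and for every permutation $\pi$ of $\{1,\dots,k\}$, $\Pr(\bm{X}_1=\bm{x}_1,\dots,\bm{X}_k=\bm{x}_k)=\Pr(\bm{X}_1=\bm{x}_{\pi(1)},\dots,\bm{X}_k=\bm{x}_{\pi(k)})$ for all block assignments. *)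

theory Defs
  imports Complex_Main "HOL-Library.FuncSet" "HOL-Combinatorics.Permutations"
begin

text \<open>Other connectives
(disjunction, implication, universal quantifier) are definable.\<close>

datatype 'p fml =
    Atom 'p "nat list"
  | Eq nat nat
  | Neg "'p fml"
  | Conj "'p fml" "'p fml"
  | Ex nat "'p fml"

fun fv :: "'p fml \<Rightarrow> nat set" where
  "fv (Atom p vs) = set vs"
| "fv (Eq x y) = {x, y}"
| "fv (Neg f) = fv f"
| "fv (Conj f g) = fv f \<union> fv g"
| "fv (Ex v f) = fv f - {v}"

fun wf_fml :: "'p set \<Rightarrow> ('p \<Rightarrow> nat) \<Rightarrow> 'p fml \<Rightarrow> bool" where
  "wf_fml P ar (Atom p vs) = (p \<in> P \<and> length vs = ar p)"
| "wf_fml P ar (Eq x y) = True"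
| "wf_fml P ar (Neg f) = wf_fml P ar f"
| "wf_fml P ar (Conj f g) = (wf_fml P ar f \<and> wf_fml P ar g)"
| "wf_fml P ar (Ex v f) = wf_fml P ar f"

definition ground_atoms :: "'p set \<Rightarrow> ('p \<Rightarrow> nat) \<Rightarrow> 'd set \<Rightarrow> ('p \<times> 'd list) set" where
  "ground_atoms P ar D = {(p, ds). p \<in> P \<and> length ds = ar p \<and> set ds \<subseteq> D}"

text \<open>A world is represented by the set of ground atoms that are true in it.
Satisfaction of a formula under an assignment of constants to logical variables
(quantifiers range over the domain D).\<close>
fun sat :: "'d set \<Rightarrow> ('p \<times> 'd list) set \<Rightarrow> (nat \<Rightarrow> 'd) \<Rightarrow> 'p fml \<Rightarrow> bool" where
  "sat D W \<sigma> (Atom p vs) = ((p, map \<sigma> vs) \<in> W)"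
| "sat D W \<sigma> (Eq x y) = (\<sigma> x = \<sigma> y)"
| "sat D W \<sigma> (Neg f) = (\<not> sat D W \<sigma> f)"
| "sat D W \<sigma> (Conj f g) = (sat D W \<sigma> f \<and> sat D W \<sigma> g)"
| "sat D W \<sigma> (Ex v f) = (\<exists>d\<in>D. sat D W (\<sigma>(v := d)) f)"

definition groundings :: "'d set \<Rightarrow> 'p fml \<Rightarrow> (nat \<Rightarrow> 'd) set" where
  "groundings D f = (fv f \<rightarrow>\<^sub>E D)"

definition is_mln :: "'p set \<Rightarrow> ('p \<Rightarrow> nat) \<Rightarrow> (real \<times> 'p fml) set \<Rightarrow> bool" where
  "is_mln P ar M = (finite P \<and> finite M \<and> (\<forall>(w, f) \<in> M. wf_fml P ar f))"

definition monadic :: "'p set \<Rightarrow> ('p \<Rightarrow> nat) \<Rightarrow> bool" where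
  "monadic P ar = (\<forall>p\<in>P. ar p = 1)"

definition world_weight :: "'d set \<Rightarrow> (real \<times> 'p fml) set \<Rightarrow> ('p \<times> 'd list) set \<Rightarrow> real" where
  "world_weight D M W =
     (\<Prod>(w, f) \<in> M. \<Prod>\<sigma> \<in> groundings D f. if sat D W \<sigma> f then exp w else 1)"

definition world_prob ::
  "'p set \<Rightarrow> ('p \<Rightarrow> nat) \<Rightarrow> 'd set \<Rightarrow> (real \<times> 'p fml) set \<Rightarrow> ('p \<times> 'd list) set \<Rightarrow> real" where
  "world_prob P ar D M W =
     world_weight D M W / (\<Sum>V \<in> Pow (ground_atoms P ar D). world_weight D M V)"

text \<open>A decomposition of the ground atoms into k blocks, each an ordered tuple of
length m: block i is (B i 0, ..., B i (m-1)).  Its width is m (the common block size).\<close>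
definition equal_size_decomposition ::
  "'a set \<Rightarrow> nat \<Rightarrow> nat \<Rightarrow> (nat \<Rightarrow> nat \<Rightarrow> 'a) \<Rightarrow> bool" where
  "equal_size_decomposition V k m B =
     (0 < k \<and> bij_betw (\<lambda>(i, j). B i j) ({..<k} \<times> {..<m}) V)"

text \<open>Exchangeability: for every permutation \<pi> of the blocks and every joint assignment
x_1..x_k of the blocks (a world W, block i having value j \<mapsto> [B i j \<in> W]),
Pr(X_1 = x_1, ..., X_k = x_k) = Pr(X_1 = x_(\<pi> 1), ..., X_k = x_(\<pi> k)).\<close>
definition exchangeable ::
  "('a set \<Rightarrow> real) \<Rightarrow> 'a set \<Rightarrow> nat \<Rightarrow> nat \<Rightarrow> (nat \<Rightarrow> nat \<Rightarrow> 'a) \<Rightarrow> bool" where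
  "exchangeable Pr V k m B =
     (equal_size_decomposition V k m B \<and>
      (\<forall>\<pi>. \<pi> permutes {..<k} \<longrightarrow>
        (\<forall>x :: nat \<Rightarrow> nat \<Rightarrow> bool.
           Pr {B i j | i j. i < k \<and> j < m \<and> x i j}
         = Pr {B i j | i j. i < k \<and> j < m \<and> x (\<pi> i) j})))"

end

theory Submission
  imports Defs
begin

text \<open>An MLN contains no constants, so renaming the constants of the domain by a
permutation maps every world to one of the same weight.  In a monadic MLN every
ground atom has the form \<open>p(d)\<close>; taking one block per constant \<open>d\<close>, namely the
tuple of atoms \<open>p\<^sub>1(d), \<dots>, p\<^sub>m(d)\<close>, a permutation of the blocks is such a renaming.\<close>

lemma sat_cong:
  assumes "\<And>x. x \<in> fv f \<Longrightarrow> \<sigma> x = \<sigma>' x"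
  shows "sat D W \<sigma> f = sat D W \<sigma>' f"
  using assms
proof (induction f arbitrary: \<sigma> \<sigma>')
  case (Atom p vs)
  then have "map \<sigma> vs = map \<sigma>' vs" by simp
  then show ?case by (simp only: sat.simps)
next
  case (Neg f)
  then show ?case by (metis fv.simps(3) sat.simps(3))
next
  case (Conj f g)
  have "sat D W \<sigma> f = sat D W \<sigma>' f" "sat D W \<sigma> g = sat D W \<sigma>' g"
    using Conj.prems by (intro Conj.IH; simp)+
  then show ?case by simp
next
  case (Ex v f)
  have "\<And>d. sat D W (\<sigma>(v := d)) f = sat D W (\<sigma>'(v := d)) f"
    using Ex.prems by (intro Ex.IH) auto
  then show ?case by simp
qed simp

lemma sat_rename_constants:
  assumes "\<tau> permutes D"
  shows "sat D (apsnd (map \<tau>) -` W) \<sigma> f = sat D W (\<tau> \<circ> \<sigma>) f"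
proof (induction f arbitrary: \<sigma>)
  case (Eq x y)
  show ?case using permutes_inj[OF assms] by (simp add: inj_eq)
next
  case (Ex v f)
  have upd: "\<And>d. \<tau> \<circ> \<sigma>(v := d) = (\<tau> \<circ> \<sigma>)(v := \<tau> d)" by auto
  have "sat D (apsnd (map \<tau>) -` W) \<sigma> (Ex v f) = (\<exists>d\<in>D. sat D W ((\<tau> \<circ> \<sigma>)(v := \<tau> d)) f)"
    by (simp only: sat.simps Ex.IH upd)
  also have "\<dots> = (\<exists>e\<in>\<tau> ` D. sat D W ((\<tau> \<circ> \<sigma>)(v := e)) f)"
    by blast
  finally show ?case unfolding permutes_image[OF assms] by (simp only: sat.simps)
qed (simp_all add: comp_def)

lemma world_weight_rename_constants:
  assumes "\<tau> permutes D"
  shows "world_weight D M (apsnd (map \<tau>) -` W) = world_weight D M W"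
  unfolding world_weight_def
proof (rule prod.cong[OF refl], clarify)
  fix w :: real and f
  let ?g = "\<lambda>\<sigma>. if sat D W \<sigma> f then exp w else 1"
  let ?h = "\<lambda>\<sigma>. restrict (\<tau> \<circ> \<sigma>) (fv f)"
  have bij: "bij_betw ?h (groundings D f) (groundings D f)"
  proof (rule bij_betwI[where g = "\<lambda>\<sigma>. restrict (inv \<tau> \<circ> \<sigma>) (fv f)"])
    show "?h \<in> groundings D f \<rightarrow> groundings D f"
      using permutes_in_image[OF assms] by (auto simp: groundings_def)
    show "(\<lambda>\<sigma>. restrict (inv \<tau> \<circ> \<sigma>) (fv f)) \<in> groundings D f \<rightarrow> groundings D f"
      using permutes_in_image[OF permutes_inv[OF assms]] by (auto simp: groundings_def)
  qed (use permutes_inverses[OF assms] in \<open>auto simp: groundings_def fun_eq_iff PiE_def extensional_def\<close>)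
  have "sat D (apsnd (map \<tau>) -` W) \<sigma> f = sat D W (?h \<sigma>) f" if "\<sigma> \<in> groundings D f" for \<sigma>
    unfolding sat_rename_constants[OF assms] by (rule sat_cong) simp
  then have "(\<Prod>\<sigma>\<in>groundings D f. if sat D (apsnd (map \<tau>) -` W) \<sigma> f then exp w else 1)
      = (\<Prod>\<sigma>\<in>groundings D f. ?g (?h \<sigma>))"
    by (intro prod.cong) auto
  also have "\<dots> = (\<Prod>\<sigma>\<in>groundings D f. ?g \<sigma>)"
    by (rule prod.reindex_bij_betw[OF bij])
  finally show "(\<Prod>\<sigma>\<in>groundings D f. if sat D (apsnd (map \<tau>) -` W) \<sigma> f then exp w else 1)
      = (\<Prod>\<sigma>\<in>groundings D f. ?g \<sigma>)" .
qed

lemma world_prob_rename_constants: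
  assumes "\<tau> permutes D"
  shows "world_prob P ar D M (apsnd (map \<tau>) -` W) = world_prob P ar D M W"
  unfolding world_prob_def world_weight_rename_constants[OF assms] ..

lemma vimage_block_world:
  assumes "inj h" and \<pi>: "\<pi> permutes {..<k}"
    and hB: "\<And>i j. i < k \<Longrightarrow> j < m \<Longrightarrow> h (B i j) = B (\<pi> i) j"
  shows "h -` {B i j | i j. i < k \<and> j < m \<and> x i j} = {B i j | i j. i < k \<and> j < m \<and> x (\<pi> i) j}"
proof (intro set_eqI iffI)
  fix a assume "a \<in> h -` {B i j | i j. i < k \<and> j < m \<and> x i j}"
  then obtain i j where a: "h a = B i j" "i < k" "j < m" "x i j" by blast
  define i' where "i' = inv \<pi> i"
  have i': "i' < k" "\<pi> i' = i"
    using a(2) permutes_in_image[OF permutes_inv[OF \<pi>]] permutes_inverses[OF \<pi>]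
    by (auto simp: i'_def)
  have "h (B i' j) = h a" using hB[OF i'(1) a(3)] i'(2) a(1) by simp
  then have "a = B i' j" using \<open>inj h\<close> by (simp add: inj_eq)
  then show "a \<in> {B i j | i j. i < k \<and> j < m \<and> x (\<pi> i) j}" using i' a by blast
next
  fix a assume "a \<in> {B i j | i j. i < k \<and> j < m \<and> x (\<pi> i) j}"
  then obtain i j where a: "a = B i j" "i < k" "j < m" "x (\<pi> i) j" by blast
  moreover have "\<pi> i < k" using a(2) permutes_in_image[OF \<pi>] by simp
  ultimately show "a \<in> h -` {B i j | i j. i < k \<and> j < m \<and> x i j}"
    using hB by blast
qed

lemma exchangeableI:
  assumes "equal_size_decomposition V k m B"
    and "\<And>\<pi>. \<pi> permutes {..<k} \<Longrightarrow> \<exists>h. inj h \<and> (\<forall>W. Pr (h -` W) = Pr W)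
                                 \<and> (\<forall>i<k. \<forall>j<m. h (B i j) = B (\<pi> i) j)"
  shows "exchangeable Pr V k m B"
  unfolding exchangeable_def
proof (intro conjI assms(1) allI impI)
  fix \<pi> x assume \<pi>: "\<pi> permutes {..<k}"
  then obtain h where h: "inj h" "\<And>W. Pr (h -` W) = Pr W"
    "\<And>i j. i < k \<Longrightarrow> j < m \<Longrightarrow> h (B i j) = B (\<pi> i) j"
    using assms(2) by blast
  have "Pr {B i j | i j. i < k \<and> j < m \<and> x i j} = Pr (h -` {B i j | i j. i < k \<and> j < m \<and> x i j})"
    by (rule h(2)[symmetric])
  also have "h -` {B i j | i j. i < k \<and> j < m \<and> x i j} = {B i j | i j. i < k \<and> j < m \<and> x (\<pi> i) j}"
    by (intro vimage_block_world h(1) \<pi> h(3))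
  finally show "Pr {B i j | i j. i < k \<and> j < m \<and> x i j} = Pr {B i j | i j. i < k \<and> j < m \<and> x (\<pi> i) j}" .
qed

lemma monadic_ground_atoms:
  assumes "monadic P ar"
  shows "ground_atoms P ar D = (\<lambda>(p, d). (p, [d])) ` (P \<times> D)"
  using assms by (force simp: ground_atoms_def monadic_def length_Suc_conv)

lemma monadic_decomposition:
  assumes "monadic P ar" "0 < k"
    and dd: "bij_betw dd {..<k} D" and pp: "bij_betw pp {..<m} P"
  shows "equal_size_decomposition (ground_atoms P ar D) k m (\<lambda>i j. (pp j, [dd i]))"
proof -
  have swap: "bij_betw prod.swap ({..<k} \<times> {..<m}) ({..<m} \<times> {..<k})"
    by (rule bij_betw_imageI) (simp_all add: product_swap)
  have atom: "bij_betw (\<lambda>(p, d). (p, [d])) (P \<times> D) (ground_atoms P ar D)"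
    unfolding monadic_ground_atoms[OF assms(1)] by (rule bij_betw_imageI) (auto simp: inj_on_def)
  have "(\<lambda>(i, j). (pp j, [dd i])) = (\<lambda>(p, d). (p, [d])) \<circ> map_prod pp dd \<circ> prod.swap"
    by (simp add: fun_eq_iff)
  then show ?thesis
    unfolding equal_size_decomposition_def
    using assms(2) bij_betw_trans[OF swap bij_betw_trans[OF bij_betw_map_prod[OF pp dd] atom]]
    by (simp only:)
qed

theorem theorem5:
  fixes P :: "'p set" and ar :: "'p \<Rightarrow> nat" and D :: "'d set"
    and M :: "(real \<times> 'p fml) set"
  assumes "is_mln P ar M"
    and "monadic P ar"
    and "finite D" and "D \<noteq> {}"
  shows "\<exists>k m B. exchangeable (world_prob P ar D M) (ground_atoms P ar D) k m B
                 \<and> m = card P"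
proof -
  obtain dd where dd: "bij_betw dd {..<card D} D"
    using ex_bij_betw_nat_finite[OF assms(3)] by (auto simp: lessThan_atLeast0)
  obtain pp where pp: "bij_betw pp {..<card P} P"
    using ex_bij_betw_nat_finite assms(1) by (fastforce simp: is_mln_def lessThan_atLeast0)
  let ?B = "\<lambda>i j. (pp j, [dd i])"
  have "exchangeable (world_prob P ar D M) (ground_atoms P ar D) (card D) (card P) ?B"
  proof (rule exchangeableI)
    show "equal_size_decomposition (ground_atoms P ar D) (card D) (card P) ?B"
      using assms(2-4) dd pp by (intro monadic_decomposition) (auto simp: card_gt_0_iff)
  next
    fix \<pi> assume \<pi>: "\<pi> permutes {..<card D}"
    let ?\<tau> = "map_permutation {..<card D} dd \<pi>"
    have \<tau>: "?\<tau> permutes D" by (rule map_permutation_permutes[OF dd \<pi>])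
    have "?\<tau> (dd i) = dd (\<pi> i)" if "i < card D" for i
      using that bij_betw_imp_inj_on[OF dd] by (simp add: map_permutation_apply)
    then show "\<exists>h. inj h \<and> (\<forall>W. world_prob P ar D M (h -` W) = world_prob P ar D M W)
                 \<and> (\<forall>i<card D. \<forall>j<card P. h (?B i j) = ?B (\<pi> i) j)"
      using permutes_inj[OF \<tau>] world_prob_rename_constants[OF \<tau>]
      by (intro exI[of _ "apsnd (map ?\<tau>)"]) auto
  qed
  then show ?thesis by blast
qed

end
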